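(* Let $k$ be a commutative ring containing $1/2$ and let $R$ be a smooth commutative $k$-algebra such that $\mathrm{Der}_k(R)$ is free with a basis $\tau_1,\dots,\tau_n$ of pairwise commuting derivations, with dual basis $\omega_1,\dots,\omega_n$ of $\Omega^1_{R/k}$ (so $df=\sum_r\tau_r(f)\omega_r$). Let $g=(g^{ij}),g'=(g'^{ij})\in GL_n(R)$ be such that $\tau'_i=g^{ij}\tau_j$ pairwise commute and $\tau''_i=g'^{ij}\tau'_j$ pairwise commute; let $(\omega'_i)$, $(\omega''_i)$ be the bases of $\Omega^1_{R/k}$ dual to $(\tau'_i)$, $(\tau''_i)$. Let $A,A'\in GL_m(R)$. For a basis $(\sigma_i)$ of commuting derivations, $G\in GL_n(R)$ and $B\in GL_m(R)$ define (summation over repeated indices) $$G^{i\alpha\gamma}(\sigma;G,B)=G^{iq}\sigma_q\big((B^{-1})^{\alpha\mu}\big)B^{\mu\gamma},$$ $$H^{ij}(\sigma;G,B)=\sigma_j\big(G^{i\nu\nu}(\sigma;G,B)\big)+\tfrac12 G^{iq}\sigma_j\big((B^{-1})^{\mu\beta}\big)B^{\beta\gamma}\sigma_q\big((B^{-1})^{\gamma\nu}\big)B^{\nu\mu}.$$ Put $h^{ij}=H^{ij}(\tau;g,A)$, $h'^{ij}=H^{ij}(\tau';g',A')$, $h''^{ij}=H^{ij}(\tau;g'g,A'A)$, $g^{p\mu\mu}=G^{p\mu\mu}(\tau;g,A)$, $g'^{i\alpha\gamma}=G^{i\alpha\gamma}(\tau';g',A')$, and define for each $i$ the $1$-form $$\mathfrak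 a_i=g'^{ip}h^{pr}\omega_r+g^{p\mu\mu}\,dg'^{ip}+g'^{i\alpha\gamma}A^{\gamma\beta}\,d\big((A^{-1})^{\beta\alpha}\big)+h'^{ip}\omega'_p-h''^{ir}\omega_r.$$ Then $$\mathfrak a_i=\tfrac12\,\mathrm{tr}\big\{A'^{-1}\tau''_i(A')\,\tau''_r(A)A^{-1}-A'^{-1}\tau''_r(A')\,\tau''_i(A)A^{-1}\big\}\,\omega''_r.$$
   Context: $(B^{-1})^{\alpha\beta}$ is the $(\alpha,\beta)$ entry of $B^{-1}$; $\tau(A)$ for a matrix $A$ means entrywise application of the derivation $\tau$. Repeated indices are summed. *)

theory Defs
  imports Main
begin

text \<open>R is modelled by a type 'a of class comm_ring_1, k by a type 'k of class comm_ring_1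
  together with the structure map phi : k \<rightarrow> R (a ring homomorphism).
  Index sets {1..n}, {1..m} are rendered as {..<n}, {..<m}; matrices are functions
  nat \<Rightarrow> nat \<Rightarrow> 'a of which only the entries with indices below the size matter.
  Since Omega^1_{R/k} is free with basis omega_1..omega_n, a 1-form is represented by its
  coordinate vector (nat \<Rightarrow> 'a) with respect to omega; then df has coordinates (tau_r f)_r.\<close>

definition is_ring_hom :: "('k::comm_ring_1 \<Rightarrow> 'a::comm_ring_1) \<Rightarrow> bool" where
  "is_ring_hom phi \<longleftrightarrow> phi 1 = 1 \<and> (\<forall>x y. phi (x + y) = phi x + phi y)
      \<and> (\<forall>x y. phi (x * y) = phi x * phi y)"

definition is_kder :: "('k::comm_ring_1 \<Rightarrow> 'a::comm_ring_1) \<Rightarrow> ('a \<Rightarrow> 'a) \<Rightarrow> bool" where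
  "is_kder phi D \<longleftrightarrow> (\<forall>x y. D (x + y) = D x + D y)
      \<and> (\<forall>x y. D (x * y) = x * D y + y * D x)
      \<and> (\<forall>c x. D (phi c * x) = phi c * D x)"

definition der_basis :: "('k::comm_ring_1 \<Rightarrow> 'a::comm_ring_1) \<Rightarrow> nat \<Rightarrow> (nat \<Rightarrow> 'a \<Rightarrow> 'a) \<Rightarrow> bool" where
  "der_basis phi n tau \<longleftrightarrow> (\<forall>r<n. is_kder phi (tau r))
      \<and> (\<forall>D. is_kder phi D \<longrightarrow> (\<exists>c. \<forall>f. D f = (\<Sum>r<n. c r * tau r f)))
      \<and> (\<forall>c. (\<forall>f. (\<Sum>r<n. c r * tau r f) = 0) \<longrightarrow> (\<forall>r<n. c r = 0))"

definition commuting :: "nat \<Rightarrow> (nat \<Rightarrow> 'a \<Rightarrow> 'a) \<Rightarrow> bool" where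
  "commuting n sigma \<longleftrightarrow> (\<forall>i<n. \<forall>j<n. sigma i \<circ> sigma j = sigma j \<circ> sigma i)"

definition mmul :: "nat \<Rightarrow> (nat \<Rightarrow> nat \<Rightarrow> 'a::comm_ring_1) \<Rightarrow> (nat \<Rightarrow> nat \<Rightarrow> 'a) \<Rightarrow> nat \<Rightarrow> nat \<Rightarrow> 'a" where
  "mmul n B C = (\<lambda>i j. \<Sum>k<n. B i k * C k j)"

definition mat_inverse :: "nat \<Rightarrow> (nat \<Rightarrow> nat \<Rightarrow> 'a::comm_ring_1) \<Rightarrow> (nat \<Rightarrow> nat \<Rightarrow> 'a) \<Rightarrow> bool" where
  "mat_inverse n B C \<longleftrightarrow> (\<forall>i<n. \<forall>j<n. mmul n B C i j = (if i = j then 1 else 0)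
                                   \<and> mmul n C B i j = (if i = j then 1 else 0))"

definition change_der :: "nat \<Rightarrow> (nat \<Rightarrow> nat \<Rightarrow> 'a::comm_ring_1) \<Rightarrow> (nat \<Rightarrow> 'a \<Rightarrow> 'a) \<Rightarrow> nat \<Rightarrow> 'a \<Rightarrow> 'a" where
  "change_der n G sigma = (\<lambda>i f. \<Sum>j<n. G i j * sigma j f)"

text \<open>w p (as omega-coordinates) is the basis of Omega^1 dual to the derivations
  G^{ir} tau_r, i.e. <w p, G^{ir} tau_r> = delta_{pi}.\<close>
definition dual_coords :: "nat \<Rightarrow> (nat \<Rightarrow> nat \<Rightarrow> 'a::comm_ring_1) \<Rightarrow> (nat \<Rightarrow> nat \<Rightarrow> 'a) \<Rightarrow> bool" where
  "dual_coords n G w \<longleftrightarrow> (\<forall>p<n. \<forall>i<n. (\<Sum>r<n. w p r * G i r) = (if p = i then 1 else 0))"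

definition Gt :: "nat \<Rightarrow> nat \<Rightarrow> (nat \<Rightarrow> 'a::comm_ring_1 \<Rightarrow> 'a) \<Rightarrow> (nat \<Rightarrow> nat \<Rightarrow> 'a)
    \<Rightarrow> (nat \<Rightarrow> nat \<Rightarrow> 'a) \<Rightarrow> (nat \<Rightarrow> nat \<Rightarrow> 'a) \<Rightarrow> nat \<Rightarrow> nat \<Rightarrow> nat \<Rightarrow> 'a" where
  "Gt n m sigma G B Binv i \<alpha> \<gamma> = (\<Sum>q<n. \<Sum>\<mu><m. G i q * sigma q (Binv \<alpha> \<mu>) * B \<mu> \<gamma>)"

text \<open>H^{ij}(sigma; G, B), with Binv = B^{-1} and hf = 1/2.\<close>
definition Ht :: "nat \<Rightarrow> nat \<Rightarrow> 'a::comm_ring_1 \<Rightarrow> (nat \<Rightarrow> 'a \<Rightarrow> 'a) \<Rightarrow> (nat \<Rightarrow> nat \<Rightarrow> 'a)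
    \<Rightarrow> (nat \<Rightarrow> nat \<Rightarrow> 'a) \<Rightarrow> (nat \<Rightarrow> nat \<Rightarrow> 'a) \<Rightarrow> nat \<Rightarrow> nat \<Rightarrow> 'a" where
  "Ht n m hf sigma G B Binv i j =
     sigma j (\<Sum>\<nu><m. Gt n m sigma G B Binv i \<nu> \<nu>)
     + hf * (\<Sum>q<n. \<Sum>\<mu><m. \<Sum>\<beta><m. \<Sum>\<gamma><m. \<Sum>\<nu><m.
              G i q * sigma j (Binv \<mu> \<beta>) * B \<beta> \<gamma> * sigma q (Binv \<gamma> \<nu>) * B \<nu> \<mu>)"

end

theory Submission
  imports Defs
begin

(* Write L_q(B) = tau_q(B^-1) B. Then G^{i alpha gamma}(tau; G, B) = G^{iq} L_q(B) and
   H^{ij}(tau; G, B) = tau_j(G^{iq} tr L_q(B)) + 1/2 G^{iq} tr(L_j(B) L_q(B)), and both are tensorial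
   in the frame: for tau' = g tau, the data (tau', g') may be replaced by (tau, g'g). Together with
   the Leibniz rule for the second term, the s-th omega-coordinate of a_i becomes
     H^{is}(tau; g'g, A) + (g'g)^{iq} c(s, q) + H^{is}(tau; g'g, A') - H^{is}(tau; g'g, A'A),
   where c(s, q) = tr(tau_s(A^-1) tau_q(A'^-1) A' A). Since L_q(A'A) = L_q(A) + A^-1 L_q(A') A, the
   last term equals the first and third plus 1/2 (g'g)^{iq} (c(s, q) + c(q, s)), leaving the
   antisymmetric part 1/2 (g'g)^{iq} (c(s, q) - c(q, s)). Differentiating A A^-1 = 1 and A'^-1 A' = 1
   identifies this with the omega-coordinate of the right-hand side. *)

definition is_derivation :: "('a::comm_ring_1 \<Rightarrow> 'a) \<Rightarrow> bool" where
  "is_derivation D \<longleftrightarrow>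
    (\<forall>x y. D (x + y) = D x + D y) \<and> (\<forall>x y. D (x * y) = x * D y + y * D x)"

lemma is_kder_imp_derivation: "is_kder phi D \<Longrightarrow> is_derivation D"
  unfolding is_kder_def is_derivation_def by auto

lemma derivation_add: "is_derivation D \<Longrightarrow> D (x + y) = D x + D y"
  by (simp add: is_derivation_def)

lemma derivation_mult: "is_derivation D \<Longrightarrow> D (x * y) = x * D y + y * D x"
  by (simp add: is_derivation_def)

lemma derivation_zero: "is_derivation D \<Longrightarrow> D 0 = 0"
  using derivation_add[of D 0 0] by simp

lemma derivation_one: "is_derivation D \<Longrightarrow> D 1 = 0"
  using derivation_mult[of D 1 1] by simp

lemma derivation_sum: "is_derivation D \<Longrightarrow> D (\<Sum>k\<in>K. f k) = (\<Sum>k\<in>K. D (f k))"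
  by (induction K rule: infinite_finite_induct) (auto simp: derivation_zero derivation_add)

lemma derivation_change_der:
  "\<forall>q<n. is_derivation (\<sigma> q) \<Longrightarrow> is_derivation (change_der n G \<sigma> p)"
  unfolding is_derivation_def change_der_def
  by (auto simp: sum.distrib sum_distrib_left algebra_simps)

definition mat_eq :: "nat \<Rightarrow> (nat \<Rightarrow> nat \<Rightarrow> 'a) \<Rightarrow> (nat \<Rightarrow> nat \<Rightarrow> 'a) \<Rightarrow> bool" where
  "mat_eq m X Y \<longleftrightarrow> (\<forall>a<m. \<forall>b<m. X a b = Y a b)"

definition mat_trace :: "nat \<Rightarrow> (nat \<Rightarrow> nat \<Rightarrow> 'a::comm_monoid_add) \<Rightarrow> 'a" where
  "mat_trace m X = (\<Sum>a<m. X a a)"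

definition mat_map :: "('a \<Rightarrow> 'b) \<Rightarrow> (nat \<Rightarrow> nat \<Rightarrow> 'a) \<Rightarrow> nat \<Rightarrow> nat \<Rightarrow> 'b" where
  "mat_map D X = (\<lambda>a b. D (X a b))"

lemma mmul_assoc: "mmul m (mmul m X Y) Z = mmul m X (mmul m Y Z)"
  unfolding mmul_def
  by (auto simp: sum_distrib_left sum_distrib_right mult.assoc intro!: sum.swap)

lemma mat_trace_mmul_commute: "mat_trace m (mmul m X Y) = mat_trace m (mmul m Y X)"
  unfolding mmul_def mat_trace_def by (subst sum.swap) (simp add: mult.commute)

lemma mat_trace_mmul_cong:
  "mat_eq m X X' \<Longrightarrow> mat_eq m Y Y' \<Longrightarrow> mat_trace m (mmul m X Y) = mat_trace m (mmul m X' Y')"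
  unfolding mat_eq_def mat_trace_def mmul_def by (auto intro!: sum.cong)

lemma mmul_add_left: "mmul m (\<lambda>a b. X a b + X' a b) Y = (\<lambda>a b. mmul m X Y a b + mmul m X' Y a b)"
  unfolding mmul_def by (auto simp: sum.distrib algebra_simps)

lemma mmul_add_right: "mmul m X (\<lambda>a b. Y a b + Y' a b) = (\<lambda>a b. mmul m X Y a b + mmul m X Y' a b)"
  unfolding mmul_def by (auto simp: sum.distrib algebra_simps)

lemma mmul_uminus: "mmul m (\<lambda>a b. - X a b) (\<lambda>a b. - Y a b) = mmul m X Y"
  unfolding mmul_def by simp

lemma mat_trace_add: "mat_trace m (\<lambda>a b. X a b + Y a b) = mat_trace m X + mat_trace m Y"
  unfolding mat_trace_def by (simp add: sum.distrib)

lemma mmul_sum_left: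
  "mmul m (\<lambda>a b. \<Sum>q<n. c q * M q a b) Y = (\<lambda>a b. \<Sum>q<n. c q * mmul m (M q) Y a b)"
  unfolding mmul_def by (auto simp: sum_distrib_left sum_distrib_right mult.assoc intro!: sum.swap)

lemma mmul_sum_right:
  "mmul m X (\<lambda>a b. \<Sum>q<n. c q * M q a b) = (\<lambda>a b. \<Sum>q<n. c q * mmul m X (M q) a b)"
  unfolding mmul_def
  by (auto simp: sum_distrib_left sum_distrib_right mult.assoc mult.left_commute intro!: sum.swap)

lemma mat_trace_sum:
  fixes c :: "nat \<Rightarrow> 'a::semiring_0"
  shows "mat_trace m (\<lambda>a b. \<Sum>q<n. c q * M q a b) = (\<Sum>q<n. c q * mat_trace m (M q))"
  unfolding mat_trace_def by (auto simp: sum_distrib_left intro!: sum.swap)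

lemma sum_mult_sum_mmul:
  "(\<Sum>p<n. G' i p * (\<Sum>q<n. G p q * c q)) = (\<Sum>q<n. mmul n G' G i q * c q)"
  unfolding mmul_def sum_distrib_left sum_distrib_right by (subst sum.swap) (simp add: mult_ac)

lemma mat_inverse_sym: "mat_inverse m B C \<Longrightarrow> mat_inverse m C B"
  unfolding mat_inverse_def by auto

lemma mmul_inverse_left_cancel:
  assumes "mat_inverse m B C" "a < m"
  shows "mmul m (mmul m B C) Y a b = Y a b"
proof -
  have "mmul m (mmul m B C) Y a b = (\<Sum>k<m. (if a = k then Y k b else 0))"
    using assms unfolding mat_inverse_def mmul_def[of m "mmul m B C"] by (intro sum.cong) auto
  then show ?thesis
    using assms(2) by simp
qed

(* An equation of functions, not merely of m x m matrices: both contracted indices stay below m. *)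
lemma mmul_inverse_cancel:
  assumes "mat_inverse m B C"
  shows "mmul m X (mmul m B (mmul m C Y)) = mmul m X Y"
  unfolding mmul_assoc[symmetric, of m B C Y]
  by (auto simp: mmul_def[of m X] mmul_inverse_left_cancel[OF assms] intro!: sum.cong)

lemma mat_trace_inverse_cancel:
  assumes "mat_inverse m B C"
  shows "mat_trace m (mmul m B (mmul m C Y)) = mat_trace m Y"
  unfolding mmul_assoc[symmetric, of m B C Y] mat_trace_def
  by (auto simp: mmul_inverse_left_cancel[OF assms] intro!: sum.cong)

lemma mat_trace_conj:
  assumes "mat_inverse m A Ainv"
  shows "mat_trace m (mmul m Ainv (mmul m Y A)) = mat_trace m Y"
proof -
  have "mat_trace m (mmul m Ainv (mmul m Y A)) = mat_trace m (mmul m (mmul m Y A) Ainv)"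
    by (rule mat_trace_mmul_commute)
  also have "\<dots> = mat_trace m (mmul m A (mmul m Ainv Y))"
    unfolding mmul_assoc by (subst mat_trace_mmul_commute) (simp add: mmul_assoc)
  finally show ?thesis
    using mat_trace_inverse_cancel[OF assms] by simp
qed

lemma mat_inverse_mmul:
  assumes "mat_inverse n G Ginv" "mat_inverse n G' G'inv"
  shows "mat_inverse n (mmul n G' G) (mmul n Ginv G'inv)"
proof -
  have "mmul n (mmul n G' G) (mmul n Ginv G'inv) = mmul n G' G'inv"
    by (simp add: mmul_assoc mmul_inverse_cancel[OF assms(1)])
  moreover have "mmul n (mmul n Ginv G'inv) (mmul n G' G) = mmul n Ginv G"
    by (simp add: mmul_assoc mmul_inverse_cancel[OF mat_inverse_sym[OF assms(2)]])
  ultimately show ?thesis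
    using assms unfolding mat_inverse_def by simp
qed

lemma mat_map_mmul:
  "is_derivation D \<Longrightarrow>
    mat_map D (mmul m X Y) = (\<lambda>a b. mmul m (mat_map D X) Y a b + mmul m X (mat_map D Y) a b)"
  unfolding mat_map_def mmul_def
  by (auto simp: derivation_sum derivation_mult sum.distrib algebra_simps)

lemma mmul_mat_map_inverse:
  assumes "is_derivation D" "mat_inverse m B C"
  shows "mat_eq m (mmul m C (mat_map D B)) (\<lambda>a b. - mmul m (mat_map D C) B a b)"
proof -
  have "mat_eq m (mat_map D (mmul m C B)) (\<lambda>a b. 0)"
    using assms unfolding mat_eq_def mat_map_def mat_inverse_def
    by (auto simp: derivation_zero derivation_one)
  then show ?thesis
    unfolding mat_map_mmul[OF assms(1)] mat_eq_def by (auto simp: eq_neg_iff_add_eq_0 add.commute)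
qed

lemma mat_map_change_der:
  "mat_map (change_der n G \<sigma> p) X = (\<lambda>a b. \<Sum>q<n. G p q * mat_map (\<sigma> q) X a b)"
  unfolding change_der_def mat_map_def ..

lemma change_der_change_der:
  "change_der n G' (change_der n G \<sigma>) = change_der n (mmul n G' G) \<sigma>"
  unfolding change_der_def by (intro ext) (rule sum_mult_sum_mmul)

definition logder :: "nat \<Rightarrow> ('a::comm_ring_1 \<Rightarrow> 'a) \<Rightarrow> (nat \<Rightarrow> nat \<Rightarrow> 'a) \<Rightarrow> (nat \<Rightarrow> nat \<Rightarrow> 'a)
    \<Rightarrow> nat \<Rightarrow> nat \<Rightarrow> 'a" where
  "logder m D Binv B = mmul m (mat_map D Binv) B"

lemma logder_change_der:
  "logder m (change_der n G \<sigma> p) Binv B = (\<lambda>a b. \<Sum>q<n. G p q * logder m (\<sigma> q) Binv B a b)"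
  unfolding logder_def mat_map_change_der mmul_sum_left ..

lemma logder_mmul:
  assumes "is_derivation D" "mat_inverse m A' A'inv"
  shows "logder m D (mmul m Ainv A'inv) (mmul m A' A)
    = (\<lambda>a b. logder m D Ainv A a b + mmul m Ainv (mmul m (logder m D A'inv A') A) a b)"
  unfolding logder_def mat_map_mmul[OF assms(1)] mmul_add_left
  by (simp add: mmul_assoc mmul_inverse_cancel[OF mat_inverse_sym[OF assms(2)]])

lemma mat_trace_logder_mmul:
  assumes "is_derivation D" "mat_inverse m A Ainv" "mat_inverse m A' A'inv"
  shows "mat_trace m (logder m D (mmul m Ainv A'inv) (mmul m A' A))
    = mat_trace m (logder m D Ainv A) + mat_trace m (logder m D A'inv A')"
  unfolding logder_mmul[OF assms(1,3)] mat_trace_add mat_trace_conj[OF assms(2)] ..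

lemma Gt_logder: "Gt n m \<sigma> G B Binv i = (\<lambda>\<alpha> \<gamma>. \<Sum>q<n. G i q * logder m (\<sigma> q) Binv B \<alpha> \<gamma>)"
  unfolding Gt_def logder_def mmul_def mat_map_def by (simp add: sum_distrib_left mult.assoc)

lemma sum_Gt_diag:
  "(\<Sum>\<nu><m. Gt n m \<sigma> G B Binv i \<nu> \<nu>) = (\<Sum>q<n. G i q * mat_trace m (logder m (\<sigma> q) Binv B))"
  unfolding Gt_logder mat_trace_def sum_distrib_left by (rule sum.swap)

lemma Ht_logder:
  "Ht n m hf \<sigma> G B Binv i j = \<sigma> j (\<Sum>\<nu><m. Gt n m \<sigma> G B Binv i \<nu> \<nu>)
     + hf * (\<Sum>q<n. G i q * mat_trace m (mmul m (logder m (\<sigma> j) Binv B) (logder m (\<sigma> q) Binv B)))"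
proof -
  have trace_sum: "(\<Sum>\<mu><m. \<Sum>\<beta><m. \<Sum>\<gamma><m. \<Sum>\<nu><m. \<sigma> j (Binv \<mu> \<beta>) * B \<beta> \<gamma> * \<sigma> q (Binv \<gamma> \<nu>) * B \<nu> \<mu>)
      = mat_trace m (mmul m (logder m (\<sigma> j) Binv B) (logder m (\<sigma> q) Binv B))" for q
  proof -
    have "mat_trace m (mmul m (logder m (\<sigma> j) Binv B) (logder m (\<sigma> q) Binv B))
       = (\<Sum>\<mu><m. \<Sum>\<gamma><m. \<Sum>\<nu><m. \<Sum>\<beta><m. \<sigma> j (Binv \<mu> \<beta>) * B \<beta> \<gamma> * \<sigma> q (Binv \<gamma> \<nu>) * B \<nu> \<mu>)"
      unfolding mat_trace_def logder_def mmul_def mat_map_def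
      by (simp add: sum_distrib_left sum_distrib_right mult.assoc)
    also have "\<dots> = (\<Sum>\<mu><m. \<Sum>\<gamma><m. \<Sum>\<beta><m. \<Sum>\<nu><m. \<sigma> j (Binv \<mu> \<beta>) * B \<beta> \<gamma> * \<sigma> q (Binv \<gamma> \<nu>) * B \<nu> \<mu>)"
      by (rule sum.cong[OF refl], rule sum.cong[OF refl], rule sum.swap)
    also have "\<dots> = (\<Sum>\<mu><m. \<Sum>\<beta><m. \<Sum>\<gamma><m. \<Sum>\<nu><m. \<sigma> j (Binv \<mu> \<beta>) * B \<beta> \<gamma> * \<sigma> q (Binv \<gamma> \<nu>) * B \<nu> \<mu>)"
      by (rule sum.cong[OF refl], rule sum.swap)
    finally show ?thesis ..
  qed
  have "(\<Sum>\<mu><m. \<Sum>\<beta><m. \<Sum>\<gamma><m. \<Sum>\<nu><m. G i q * \<sigma> j (Binv \<mu> \<beta>) * B \<beta> \<gamma> * \<sigma> q (Binv \<gamma> \<nu>) * B \<nu> \<mu>)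
      = G i q * mat_trace m (mmul m (logder m (\<sigma> j) Binv B) (logder m (\<sigma> q) Binv B))" for q
    by (simp add: sum_distrib_left mult.assoc flip: trace_sum[of q])
  then show ?thesis
    unfolding Ht_def by (simp only:)
qed

lemma Gt_change_der: "Gt n m (change_der n G \<sigma>) G' B Binv = Gt n m \<sigma> (mmul n G' G) B Binv"
  unfolding Gt_logder logder_change_der by (intro ext) (rule sum_mult_sum_mmul)

lemma Ht_change_der:
  "Ht n m hf (change_der n G \<sigma>) G' B Binv i p = (\<Sum>r<n. G p r * Ht n m hf \<sigma> (mmul n G' G) B Binv i r)"
proof -
  define L where "L q = logder m (\<sigma> q) Binv B" for q
  define T where "T r u = mat_trace m (mmul m (L r) (L u))" for r u
  have "(\<Sum>t<n. G' i t * mat_trace m (mmul m (logder m (change_der n G \<sigma> p) Binv B)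
                                              (logder m (change_der n G \<sigma> t) Binv B)))
      = (\<Sum>t<n. G' i t * (\<Sum>r<n. G p r * (\<Sum>u<n. G t u * T r u)))"
    unfolding logder_change_der mmul_sum_left mmul_sum_right mat_trace_sum L_def T_def ..
  also have "\<dots> = (\<Sum>r<n. G p r * (\<Sum>t<n. G' i t * (\<Sum>u<n. G t u * T r u)))"
    unfolding sum_distrib_left by (subst sum.swap) (simp add: mult.left_commute)
  also have "\<dots> = (\<Sum>r<n. G p r * (\<Sum>u<n. mmul n G' G i u * T r u))"
    unfolding sum_mult_sum_mmul ..
  finally show ?thesis
    unfolding Ht_logder Gt_change_der T_def L_def
    by (simp add: change_der_def distrib_left sum.distrib sum_distrib_left mult.left_commute)
qed

lemma Ht_mmul_frame:
  assumes "is_derivation (\<sigma> s)"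
  shows "(\<Sum>p<n. G' i p * Ht n m hf \<sigma> G B Binv p s)
      + (\<Sum>p<n. (\<Sum>\<nu><m. Gt n m \<sigma> G B Binv p \<nu> \<nu>) * \<sigma> s (G' i p))
    = Ht n m hf \<sigma> (mmul n G' G) B Binv i s"
proof -
  define S where "S p = (\<Sum>\<nu><m. Gt n m \<sigma> G B Binv p \<nu> \<nu>)" for p
  define T where "T q = mat_trace m (mmul m (logder m (\<sigma> s) Binv B) (logder m (\<sigma> q) Binv B))" for q
  have "(\<Sum>p<n. G' i p * \<sigma> s (S p)) + (\<Sum>p<n. S p * \<sigma> s (G' i p)) = \<sigma> s (\<Sum>p<n. G' i p * S p)"
    by (simp add: derivation_sum[OF assms] derivation_mult[OF assms] sum.distrib)
  also have "(\<Sum>p<n. G' i p * S p) = (\<Sum>\<nu><m. Gt n m \<sigma> (mmul n G' G) B Binv i \<nu> \<nu>)"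
    unfolding S_def sum_Gt_diag by (rule sum_mult_sum_mmul)
  finally have derivative_part: "(\<Sum>p<n. G' i p * \<sigma> s (S p)) + (\<Sum>p<n. S p * \<sigma> s (G' i p))
      = \<sigma> s (\<Sum>\<nu><m. Gt n m \<sigma> (mmul n G' G) B Binv i \<nu> \<nu>)" .
  have "(\<Sum>p<n. G' i p * (hf * (\<Sum>q<n. G p q * T q))) = hf * (\<Sum>q<n. mmul n G' G i q * T q)"
    unfolding sum_mult_sum_mmul[symmetric] by (simp add: sum_distrib_left mult.left_commute)
  with derivative_part show ?thesis
    unfolding Ht_logder[of _ _ _ _ G] Ht_logder[of _ _ _ _ "mmul n G' G"] S_def[symmetric] T_def[symmetric]
    by (simp add: distrib_left sum.distrib)
qed

lemma dual_coords_eq_inverse: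
  assumes "mat_inverse n G Ginv" "dual_coords n G w" "p < n" "s < n"
  shows "w p s = Ginv s p"
proof -
  have "w p s = (\<Sum>r<n. w p r * (if r = s then 1 else 0))"
    using assms(4) by (simp add: if_distrib cong: if_cong)
  also have "\<dots> = (\<Sum>r<n. w p r * (\<Sum>k<n. Ginv s k * G k r))"
    using assms(1,4) unfolding mat_inverse_def mmul_def by (intro sum.cong) auto
  also have "\<dots> = (\<Sum>k<n. Ginv s k * (\<Sum>r<n. w p r * G k r))"
    unfolding sum_distrib_left by (subst sum.swap) (simp add: mult_ac)
  also have "\<dots> = (\<Sum>k<n. Ginv s k * (if p = k then 1 else 0))"
    using assms(2,3) unfolding dual_coords_def by (intro sum.cong) auto
  finally show ?thesis
    using assms(3) by (simp add: if_distrib cong: if_cong)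
qed

lemma sum_dual_coords:
  assumes "mat_inverse n G Ginv" "dual_coords n G w" "s < n"
  shows "(\<Sum>p<n. (\<Sum>r<n. G p r * c r) * w p s) = c s"
proof -
  have "(\<Sum>p<n. (\<Sum>r<n. G p r * c r) * w p s) = (\<Sum>p<n. Ginv s p * (\<Sum>r<n. G p r * c r))"
    using assms by (intro sum.cong) (simp_all add: dual_coords_eq_inverse mult.commute)
  also have "\<dots> = (\<Sum>r<n. (if s = r then c r else 0))"
    using assms(1,3) unfolding sum_mult_sum_mmul mat_inverse_def by (intro sum.cong) auto
  finally show ?thesis
    using assms(3) by simp
qed

definition cross_trace :: "nat \<Rightarrow> ('a::comm_ring_1 \<Rightarrow> 'a) \<Rightarrow> ('a \<Rightarrow> 'a)
    \<Rightarrow> (nat \<Rightarrow> nat \<Rightarrow> 'a) \<Rightarrow> (nat \<Rightarrow> nat \<Rightarrow> 'a)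
    \<Rightarrow> (nat \<Rightarrow> nat \<Rightarrow> 'a) \<Rightarrow> (nat \<Rightarrow> nat \<Rightarrow> 'a) \<Rightarrow> 'a" where
  "cross_trace m D E Ainv A'inv A' A = mat_trace m (mmul m (mat_map D Ainv) (mmul m (logder m E A'inv A') A))"

lemma cross_trace_change_der_left:
  "cross_trace m (change_der n G \<sigma> r) E Ainv A'inv A' A
    = (\<Sum>q<n. G r q * cross_trace m (\<sigma> q) E Ainv A'inv A' A)"
  unfolding cross_trace_def mat_map_change_der mmul_sum_left mat_trace_sum ..

lemma cross_trace_change_der_right:
  "cross_trace m D (change_der n G \<sigma> r) Ainv A'inv A' A
    = (\<Sum>q<n. G r q * cross_trace m D (\<sigma> q) Ainv A'inv A' A)"
  unfolding cross_trace_def logder_change_der mmul_sum_left mmul_sum_right mat_trace_sum ..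

lemma mat_trace_mmul_logder_mmul:
  assumes "is_derivation D" "is_derivation E" "mat_inverse m A Ainv" "mat_inverse m A' A'inv"
  shows "mat_trace m (mmul m (logder m D (mmul m Ainv A'inv) (mmul m A' A))
                            (logder m E (mmul m Ainv A'inv) (mmul m A' A)))
    = mat_trace m (mmul m (logder m D Ainv A) (logder m E Ainv A))
      + cross_trace m D E Ainv A'inv A' A + cross_trace m E D Ainv A'inv A' A
      + mat_trace m (mmul m (logder m D A'inv A') (logder m E A'inv A'))"
proof -
  have mixed: "mat_trace m (mmul m (logder m D1 Ainv A) (mmul m Ainv (mmul m (logder m D2 A'inv A') A)))
      = cross_trace m D1 D2 Ainv A'inv A' A" for D1 D2
    unfolding cross_trace_def logder_def[of m D1] mmul_assoc mmul_inverse_cancel[OF assms(3)] ..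
  have "mat_trace m (mmul m (mmul m Ainv (mmul m (logder m D A'inv A') A)) (mmul m Ainv (mmul m (logder m E A'inv A') A)))
      = mat_trace m (mmul m (logder m D A'inv A') (logder m E A'inv A'))"
    unfolding mmul_assoc mmul_inverse_cancel[OF assms(3)]
    using mat_trace_conj[OF assms(3), of "mmul m (logder m D A'inv A') (logder m E A'inv A')"]
    by (simp add: mmul_assoc)
  moreover have "mat_trace m (mmul m (mmul m Ainv (mmul m (logder m D A'inv A') A)) (logder m E Ainv A))
      = cross_trace m E D Ainv A'inv A' A"
    by (subst mat_trace_mmul_commute) (rule mixed)
  ultimately show ?thesis
    unfolding logder_mmul[OF assms(1,4)] logder_mmul[OF assms(2,4)] mmul_add_left mmul_add_right
      mat_trace_add mixed
    by (simp only: add.assoc)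
qed

lemma Ht_mmul_matrix:
  assumes "\<forall>q<n. is_derivation (\<sigma> q)" "s < n"
    and "mat_inverse m A Ainv" "mat_inverse m A' A'inv"
  shows "Ht n m hf \<sigma> G (mmul m A' A) (mmul m Ainv A'inv) i s
    = Ht n m hf \<sigma> G A Ainv i s + Ht n m hf \<sigma> G A' A'inv i s
      + hf * ((\<Sum>q<n. G i q * cross_trace m (\<sigma> s) (\<sigma> q) Ainv A'inv A' A)
            + (\<Sum>q<n. G i q * cross_trace m (\<sigma> q) (\<sigma> s) Ainv A'inv A' A))"
proof -
  have linear_part: "(\<Sum>q<n. G i q * mat_trace m (logder m (\<sigma> q) (mmul m Ainv A'inv) (mmul m A' A)))
      = (\<Sum>q<n. G i q * mat_trace m (logder m (\<sigma> q) Ainv A))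
        + (\<Sum>q<n. G i q * mat_trace m (logder m (\<sigma> q) A'inv A'))"
    using assms by (simp add: mat_trace_logder_mmul distrib_left sum.distrib)
  have quadratic_part:
    "(\<Sum>q<n. G i q * mat_trace m (mmul m (logder m (\<sigma> s) (mmul m Ainv A'inv) (mmul m A' A))
                                      (logder m (\<sigma> q) (mmul m Ainv A'inv) (mmul m A' A))))
      = (\<Sum>q<n. G i q * mat_trace m (mmul m (logder m (\<sigma> s) Ainv A) (logder m (\<sigma> q) Ainv A)))
        + (\<Sum>q<n. G i q * mat_trace m (mmul m (logder m (\<sigma> s) A'inv A') (logder m (\<sigma> q) A'inv A')))
        + ((\<Sum>q<n. G i q * cross_trace m (\<sigma> s) (\<sigma> q) Ainv A'inv A' A)
          + (\<Sum>q<n. G i q * cross_trace m (\<sigma> q) (\<sigma> s) Ainv A'inv A' A))"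
    using assms by (simp add: mat_trace_mmul_logder_mmul distrib_left sum.distrib add_ac)
  show ?thesis
    unfolding Ht_logder sum_Gt_diag linear_part quadratic_part derivation_add[OF assms(1)[rule_format, OF assms(2)]]
    by (simp only: distrib_left add_ac)
qed

lemma sum_Gt_eq_cross_trace:
  "(\<Sum>\<alpha><m. \<Sum>\<gamma><m. \<Sum>\<beta><m. Gt n m \<sigma> G A' A'inv i \<alpha> \<gamma> * A \<gamma> \<beta> * D (Ainv \<beta> \<alpha>))
    = (\<Sum>q<n. G i q * cross_trace m D (\<sigma> q) Ainv A'inv A' A)"
proof -
  have "(\<Sum>\<alpha><m. \<Sum>\<gamma><m. \<Sum>\<beta><m. Gt n m \<sigma> G A' A'inv i \<alpha> \<gamma> * A \<gamma> \<beta> * D (Ainv \<beta> \<alpha>))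
      = mat_trace m (mmul m (Gt n m \<sigma> G A' A'inv i) (mmul m A (mat_map D Ainv)))"
    unfolding mat_trace_def mmul_def mat_map_def by (simp add: sum_distrib_left mult.assoc)
  also have "\<dots> = (\<Sum>q<n. G i q * mat_trace m (mmul m (mat_map D Ainv) (mmul m (logder m (\<sigma> q) A'inv A') A)))"
    unfolding Gt_logder mmul_sum_left mat_trace_sum
    by (subst (2) mat_trace_mmul_commute) (simp add: mmul_assoc)
  finally show ?thesis
    unfolding cross_trace_def .
qed

lemma sum_derivatives_eq_cross_trace:
  assumes "is_derivation D" "is_derivation E" "mat_inverse m A Ainv" "mat_inverse m A' A'inv"
  shows "(\<Sum>a<m. \<Sum>b<m. \<Sum>c<m. \<Sum>d<m. A'inv a b * D (A' b c) * E (A c d) * Ainv d a)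
    = cross_trace m E D Ainv A'inv A' A"
proof -
  have "(\<Sum>a<m. \<Sum>b<m. \<Sum>c<m. \<Sum>d<m. A'inv a b * D (A' b c) * E (A c d) * Ainv d a)
     = (\<Sum>a<m. \<Sum>c<m. \<Sum>b<m. \<Sum>d<m. A'inv a b * D (A' b c) * E (A c d) * Ainv d a)"
    by (rule sum.cong[OF refl], rule sum.swap)
  also have "\<dots> = (\<Sum>a<m. \<Sum>c<m. \<Sum>d<m. \<Sum>b<m. A'inv a b * D (A' b c) * E (A c d) * Ainv d a)"
    by (rule sum.cong[OF refl], rule sum.cong[OF refl], rule sum.swap)
  also have "\<dots> = mat_trace m (mmul m (mmul m A'inv (mat_map D A')) (mmul m (mat_map E A) Ainv))"
    unfolding mat_trace_def mmul_def mat_map_def by (simp add: sum_distrib_left sum_distrib_right mult.assoc)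
  also have "\<dots> = mat_trace m (mmul m (mmul m (mat_map D A'inv) A') (mmul m A (mat_map E Ainv)))"
  proof -
    have "mat_eq m (mmul m A'inv (mat_map D A')) (\<lambda>a b. - mmul m (mat_map D A'inv) A' a b)"
      by (rule mmul_mat_map_inverse[OF assms(1,4)])
    moreover have "mat_eq m (mmul m (mat_map E A) Ainv) (\<lambda>a b. - mmul m A (mat_map E Ainv) a b)"
      using mmul_mat_map_inverse[OF assms(2) mat_inverse_sym[OF assms(3)]] unfolding mat_eq_def by simp
    ultimately have "mat_trace m (mmul m (mmul m A'inv (mat_map D A')) (mmul m (mat_map E A) Ainv))
        = mat_trace m (mmul m (\<lambda>a b. - mmul m (mat_map D A'inv) A' a b)
                              (\<lambda>a b. - mmul m A (mat_map E Ainv) a b))"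
      by (rule mat_trace_mmul_cong)
    then show ?thesis
      by (simp only: mmul_uminus)
  qed
  also have "\<dots> = cross_trace m E D Ainv A'inv A' A"
    unfolding cross_trace_def logder_def mmul_assoc[symmetric, of m "mmul m (mat_map D A'inv) A'"]
    by (rule mat_trace_mmul_commute)
  finally show ?thesis .
qed

lemma sum_trace_commutator_dual_coords:
  assumes der: "\<forall>q<n. is_derivation (\<sigma> q)"
    and G: "mat_inverse n G Ginv" "dual_coords n G w" and "s < n"
    and A: "mat_inverse m A Ainv" "mat_inverse m A' A'inv"
  shows "(\<Sum>r<n. hf *
           (\<Sum>a<m. \<Sum>b<m. \<Sum>c<m. \<Sum>d<m.
               A'inv a b * change_der n G \<sigma> i (A' b c) * change_der n G \<sigma> r (A c d) * Ainv d a
             - A'inv a b * change_der n G \<sigma> r (A' b c) * change_der n G \<sigma> i (A c d) * Ainv d a)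
           * w r s)
    = hf * ((\<Sum>q<n. G i q * cross_trace m (\<sigma> s) (\<sigma> q) Ainv A'inv A' A)
          - (\<Sum>q<n. G i q * cross_trace m (\<sigma> q) (\<sigma> s) Ainv A'inv A' A))"
proof -
  let ?\<sigma>'' = "change_der n G \<sigma>"
  let ?cross = "\<lambda>D E. cross_trace m D E Ainv A'inv A' A"
  have der'': "is_derivation (?\<sigma>'' r)" for r
    by (rule derivation_change_der[OF der])
  have "hf * (\<Sum>a<m. \<Sum>b<m. \<Sum>c<m. \<Sum>d<m.
               A'inv a b * ?\<sigma>'' i (A' b c) * ?\<sigma>'' r (A c d) * Ainv d a
             - A'inv a b * ?\<sigma>'' r (A' b c) * ?\<sigma>'' i (A c d) * Ainv d a)
      = (\<Sum>q<n. G r q * (hf * (?cross (\<sigma> q) (?\<sigma>'' i) - ?cross (?\<sigma>'' i) (\<sigma> q))))" for r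
    unfolding sum_subtractf sum_derivatives_eq_cross_trace[OF der'' der'' A]
      cross_trace_change_der_left[where r=r] cross_trace_change_der_right[where r=r]
    by (simp add: sum_distrib_left right_diff_distrib sum_subtractf mult.left_commute)
  then have "(\<Sum>r<n. hf *
           (\<Sum>a<m. \<Sum>b<m. \<Sum>c<m. \<Sum>d<m.
               A'inv a b * ?\<sigma>'' i (A' b c) * ?\<sigma>'' r (A c d) * Ainv d a
             - A'inv a b * ?\<sigma>'' r (A' b c) * ?\<sigma>'' i (A c d) * Ainv d a)
           * w r s)
      = hf * (?cross (\<sigma> s) (?\<sigma>'' i) - ?cross (?\<sigma>'' i) (\<sigma> s))"
    using sum_dual_coords[OF G \<open>s < n\<close>] by simp
  then show ?thesis
    unfolding cross_trace_change_der_left cross_trace_change_der_right .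
qed

theorem lemma5p5:
  fixes phi :: "'k::comm_ring_1 \<Rightarrow> 'a::comm_ring_1"
    and half :: 'k
    and n m :: nat
    and tau :: "nat \<Rightarrow> 'a \<Rightarrow> 'a"
    and g ginv g' g'inv w' w'' A Ainv A' A'inv :: "nat \<Rightarrow> nat \<Rightarrow> 'a"
    and i s :: nat
  assumes hom: "is_ring_hom phi"
    and half: "2 * half = 1"
    and basis: "der_basis phi n tau"
    and comm: "commuting n tau"
    and g_inv: "mat_inverse n g ginv"
    and g'_inv: "mat_inverse n g' g'inv"
    and comm': "commuting n (change_der n g tau)"
    and comm'': "commuting n (change_der n g' (change_der n g tau))"
    and dual': "dual_coords n g w'"
    and dual'': "dual_coords n (mmul n g' g) w''"
    and A_inv: "mat_inverse m A Ainv"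
    and A'_inv: "mat_inverse m A' A'inv"
    and i: "i < n" and s: "s < n"
  shows
   "(let hf = phi half;
         tau' = change_der n g tau;
         tau'' = change_der n g' tau';
         h = Ht n m hf tau g A Ainv;
         h' = Ht n m hf tau' g' A' A'inv;
         h'' = Ht n m hf tau (mmul n g' g) (mmul m A' A) (mmul m Ainv A'inv);
         gs = (\<lambda>p. \<Sum>\<mu><m. Gt n m tau g A Ainv p \<mu> \<mu>);
         gg' = Gt n m tau' g' A' A'inv
     in (\<Sum>p<n. g' i p * h p s)
        + (\<Sum>p<n. gs p * tau s (g' i p))
        + (\<Sum>\<alpha><m. \<Sum>\<gamma><m. \<Sum>\<beta><m. gg' i \<alpha> \<gamma> * A \<gamma> \<beta> * tau s (Ainv \<beta> \<alpha>))
        + (\<Sum>p<n. h' i p * w' p s)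
        - h'' i s
      = (\<Sum>r<n. hf *
           (\<Sum>a<m. \<Sum>b<m. \<Sum>c<m. \<Sum>d<m.
               A'inv a b * tau'' i (A' b c) * tau'' r (A c d) * Ainv d a
             - A'inv a b * tau'' r (A' b c) * tau'' i (A c d) * Ainv d a)
           * w'' r s))"
proof -
  have der: "\<forall>q<n. is_derivation (tau q)"
    using basis unfolding der_basis_def by (blast intro: is_kder_imp_derivation)
  have half_sum: "phi half + phi half = 1"
    using hom half unfolding is_ring_hom_def by (metis mult_2)
  have collect: "a + x + b - (a + b + phi half * (x + y)) = phi half * (x - y)" for a b x y :: 'a
  proof -
    have "a + x + b - (a + b + phi half * (x + y)) = (phi half + phi half) * x - phi half * (x + y)"
      by (simp only: half_sum mult_1_left) (simp add: algebra_simps)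
    also have "\<dots> = phi half * (x - y)"
      by (simp add: algebra_simps)
    finally show ?thesis .
  qed
  show ?thesis
    unfolding Let_def change_der_change_der Gt_change_der Ht_change_der
      Ht_mmul_frame[where \<sigma>=tau and G'=g' and G=g, OF der[rule_format, OF s]]
      sum_Gt_eq_cross_trace[where \<sigma>=tau and G="mmul n g' g"]
      sum_dual_coords[OF g_inv dual' s]
      Ht_mmul_matrix[where \<sigma>=tau, OF der s A_inv A'_inv]
      sum_trace_commutator_dual_coords[where \<sigma>=tau,
        OF der mat_inverse_mmul[OF g_inv g'_inv] dual'' s A_inv A'_inv]
    by (rule collect)
qed

end
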